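(* Let $\mathcal{H}$ be a real $m^{\rm th}$-order $n$-dimensional strong Hankel tensor ($m\ge2$, $m(n-1)$ even). Then $\mathcal{H}$ has no negative H-eigenvalues.
   Context: The Hankel tensor generated by ${\bf h}=(h_0,\dots,h_{m(n-1)})\in\mathbb{R}^{m(n-1)+1}$ has entries $\mathcal{H}_{i_1\dots i_m}=h_{i_1+\dots+i_m}$, $0\le i_j\le n-1$; its associated Hankel matrix is $H$ with $H_{ij}=h_{i+j}$, $0\le i,j\le m(n-1)/2$; $\mathcal{H}$ is a strong Hankel tensor if $H$ is positive semi-definite. A real $\lambda$ is an H-eigenvalue of $\mathcal{H}$ if there is nonzero ${\bf x}\in\mathbb{R}^n$ with $\mathcal{H}{\bf x}^{m-1}=\lambda{\bf x}^{[m-1]}$, where $(\mathcal{H}{\bf x}^{m-1})_i=\sum_{i_2,\dots,i_m}\mathcal{H}_{i i_2\dots i_m}x_{i_2}\cdots x_{i_m}$ and ${\bf x}^{[m-1]}=(x_1^{m-1},\dots,x_n^{m-1})^\top$. *)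

theory Defs
  imports Complex_Main "HOL-Library.FuncSet"
begin

text \<open>A Hankel tensor of order m and dimension n is given by its generating vector
  h = (h_0, ..., h_{m(n-1)}), modelled as a function h :: nat => real (only the values
  h_0 .. h_{m(n-1)} are ever used). Indices run over 0..n-1.\<close>

definition hankel_tensor :: "(nat \<Rightarrow> real) \<Rightarrow> nat list \<Rightarrow> real" where
  "hankel_tensor h is = h (sum_list is)"

definition hankel_matrix :: "(nat \<Rightarrow> real) \<Rightarrow> nat \<Rightarrow> nat \<Rightarrow> real" where
  "hankel_matrix h i j = h (i + j)"

definition psd :: "nat \<Rightarrow> (nat \<Rightarrow> nat \<Rightarrow> real) \<Rightarrow> bool" where
  "psd N A \<longleftrightarrow> (\<forall>y :: nat \<Rightarrow> real.
      (\<Sum>i<N. \<Sum>j<N. A i j * y i * y j) \<ge> 0)"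

definition strong_hankel :: "nat \<Rightarrow> nat \<Rightarrow> (nat \<Rightarrow> real) \<Rightarrow> bool" where
  "strong_hankel m n h \<longleftrightarrow> psd (m * (n - 1) div 2 + 1) (hankel_matrix h)"

definition hankel_apply :: "nat \<Rightarrow> nat \<Rightarrow> (nat \<Rightarrow> real) \<Rightarrow> (nat \<Rightarrow> real) \<Rightarrow> nat \<Rightarrow> real" where
  "hankel_apply m n h x i =
     (\<Sum>f \<in> {..<m-1} \<rightarrow>\<^sub>E {..<n}.
        hankel_tensor h (i # map f [0..<m-1]) * (\<Prod>k<m-1. x (f k)))"

definition H_eigenvalue :: "nat \<Rightarrow> nat \<Rightarrow> (nat \<Rightarrow> real) \<Rightarrow> real \<Rightarrow> bool" where
  "H_eigenvalue m n h lam \<longleftrightarrow>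
     (\<exists>x :: nat \<Rightarrow> real. (\<exists>i<n. x i \<noteq> 0) \<and>
        (\<forall>i<n. hankel_apply m n h x i = lam * x i ^ (m - 1)))"

end

theory Submission imports Defs "HOL-Computational_Algebra.Polynomial" begin

text \<open>Identify a vector x with the polynomial p(t) = sum x_i t^i and the generating vector h
  with the linear functional L(t^e) = h_e. Then (H x^(m-1))_i = L(t^i p^(m-1)), and positive
  semidefiniteness of the Hankel matrix says L(q^2) >= 0 whenever deg q <= m(n-1)/2.
  For an eigenpair (lambda, x) and any weights w this gives
  lambda * sum w_i x_i^(m-1) = L(w(t) p^(m-1)), so it suffices to choose w with
  sum w_i x_i^(m-1) > 0 and w p^(m-1) a square of low degree: w = p for even m, and for odd m
  (so n - 1 = 2r is even) w = (1 + t + ... + t^r)^2, whose coefficients up to degree n - 1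
  are all positive.\<close>

definition poly_of_vec :: "nat \<Rightarrow> (nat \<Rightarrow> 'a::comm_monoid_add) \<Rightarrow> 'a poly" where
  "poly_of_vec n x = (\<Sum>a<n. monom (x a) a)"

definition hankel_functional :: "(nat \<Rightarrow> real) \<Rightarrow> nat \<Rightarrow> real poly \<Rightarrow> real" where
  "hankel_functional h M P = (\<Sum>e<M. h e * coeff P e)"

lemma hankel_functional_sum:
  "hankel_functional h M (\<Sum>i\<in>A. f i) = (\<Sum>i\<in>A. hankel_functional h M (f i))"
  unfolding hankel_functional_def by (simp add: coeff_sum sum_distrib_left sum.swap[of _ A])

lemma hankel_functional_smult:
  "hankel_functional h M (smult c P) = c * hankel_functional h M P"
  unfolding hankel_functional_def by (simp add: sum_distrib_left algebra_simps)

lemma hankel_functional_monom: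
  "hankel_functional h M (monom c e) = (if e < M then h e * c else 0)"
  unfolding hankel_functional_def by (simp add: coeff_monom if_distrib sum.If_cases cong: if_cong)

lemma degree_poly_of_vec: "degree (poly_of_vec n x) \<le> n - 1"
  unfolding poly_of_vec_def
  by (intro degree_sum_le) (auto intro: order_trans[OF degree_monom_le])

lemma poly_of_vec_coeff:
  assumes "degree p < n"
  shows "poly_of_vec n (coeff p) = p"
proof -
  have "{..n-1} = {..<n}" using assms by auto
  then show ?thesis
    using poly_as_sum_of_monoms'[of p "n - 1"] assms by (simp add: poly_of_vec_def)
qed

lemma prod_monom:
  "finite A \<Longrightarrow> (\<Prod>j\<in>A. monom (c j) (e j)) = monom (\<Prod>j\<in>A. c j) (\<Sum>j\<in>A. e j)"
  by (induction A rule: finite_induct) (auto simp: mult_monom monom_0 one_pCons)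

lemma power_poly_of_vec:
  "poly_of_vec n x ^ k =
     (\<Sum>f\<in>{..<k} \<rightarrow>\<^sub>E {..<n}. monom (\<Prod>j<k. x (f j)) (\<Sum>j<k. f j))"
proof -
  have "poly_of_vec n x ^ k = (\<Prod>j<k. \<Sum>a<n. monom (x a) a)"
    by (simp add: poly_of_vec_def)
  also have "\<dots> = (\<Sum>f\<in>{..<k} \<rightarrow>\<^sub>E {..<n}. \<Prod>j<k. monom (x (f j)) (f j))"
    by (rule prod_sum_PiE) auto
  finally show ?thesis by (simp add: prod_monom)
qed

lemma sum_PiE_le:
  fixes f :: "nat \<Rightarrow> nat"
  assumes "f \<in> {..<k} \<rightarrow>\<^sub>E {..<n}"
  shows "(\<Sum>j<k. f j) \<le> k * (n - 1)"
proof -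
  have "f j \<le> n - 1" if "j < k" for j
  proof -
    have "f j < n" using assms that by (auto simp: PiE_iff)
    then show ?thesis by linarith
  qed
  then show ?thesis using sum_bounded_above[of "{..<k}" f "n - 1"] by simp
qed

lemma hankel_apply_eq_functional:
  assumes "m \<ge> 1" "i < n" "m * (n - 1) < M"
  shows "hankel_apply m n h x i =
           hankel_functional h M (monom 1 i * poly_of_vec n x ^ (m - 1))"
proof -
  have bound: "i + (\<Sum>j<m-1. f j) < M" if "f \<in> {..<m-1} \<rightarrow>\<^sub>E {..<n}" for f
  proof -
    have "(m - 1) * (n - 1) + (n - 1) = m * (n - 1)"
      using assms(1) by (cases m) auto
    then show ?thesis using sum_PiE_le[OF that] assms by linarith
  qed
  have "monom 1 i * poly_of_vec n x ^ (m - 1) =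
      (\<Sum>f\<in>{..<m-1} \<rightarrow>\<^sub>E {..<n}. monom (\<Prod>j<m-1. x (f j)) (i + (\<Sum>j<m-1. f j)))"
    by (simp add: power_poly_of_vec sum_distrib_left mult_monom)
  then have "hankel_functional h M (monom 1 i * poly_of_vec n x ^ (m - 1)) =
      (\<Sum>f\<in>{..<m-1} \<rightarrow>\<^sub>E {..<n}. if i + (\<Sum>j<m-1. f j) < M
         then h (i + (\<Sum>j<m-1. f j)) * (\<Prod>j<m-1. x (f j)) else 0)"
    by (simp only: hankel_functional_sum hankel_functional_monom)
  also have "\<dots> =
      (\<Sum>f\<in>{..<m-1} \<rightarrow>\<^sub>E {..<n}. h (i + (\<Sum>j<m-1. f j)) * (\<Prod>j<m-1. x (f j)))"
    using bound by (intro sum.cong) auto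
  also have "\<dots> = hankel_apply m n h x i"
    by (simp add: hankel_apply_def hankel_tensor_def interv_sum_list_conv_sum_set_nat lessThan_atLeast0)
  finally show ?thesis by simp
qed

lemma hankel_functional_weighted:
  "(\<Sum>i<n. w i * hankel_functional h M (monom 1 i * P)) =
     hankel_functional h M (poly_of_vec n w * P)"
proof -
  have "monom (w i) i * P = smult (w i) (monom 1 i * P)" for i
    by (metis mult_smult_left smult_monom mult.right_neutral)
  then show ?thesis
    by (simp add: poly_of_vec_def sum_distrib_right hankel_functional_sum hankel_functional_smult)
qed

lemma hankel_functional_square:
  assumes "degree q < N" "2 * (N - 1) < M"
  shows "hankel_functional h M (q * q) =
           (\<Sum>a<N. \<Sum>b<N. hankel_matrix h a b * coeff q a * coeff q b)"
proof -
  have q: "q = (\<Sum>a<N. monom (coeff q a) a)"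
    using poly_of_vec_coeff[OF assms(1)] by (simp add: poly_of_vec_def)
  have "q * q = (\<Sum>a<N. \<Sum>b<N. monom (coeff q a * coeff q b) (a + b))"
    by (subst (1 2) q) (simp add: sum_product mult_monom)
  then have "hankel_functional h M (q * q) =
      (\<Sum>a<N. \<Sum>b<N. if a + b < M then h (a + b) * (coeff q a * coeff q b) else 0)"
    by (simp only: hankel_functional_sum hankel_functional_monom)
  also have "\<dots> = (\<Sum>a<N. \<Sum>b<N. hankel_matrix h a b * coeff q a * coeff q b)"
    using assms(2) by (intro sum.cong refl) (auto simp: hankel_matrix_def)
  finally show ?thesis .
qed

lemma strong_hankel_functional_square_nonneg:
  assumes "strong_hankel m n h" "degree q \<le> m * (n - 1) div 2"
  shows "hankel_functional h (m * (n - 1) + 1) (q * q) \<ge> 0"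
  using assms hankel_functional_square[of q "m * (n - 1) div 2 + 1"]
  unfolding strong_hankel_def psd_def by simp

lemma coeff_square_ones_pos:
  assumes "i \<le> 2 * r"
  shows "0 < coeff ((\<Sum>a\<le>r. monom (1::real) a) ^ 2) i"
proof -
  define s where "s = (\<Sum>a\<le>r. monom (1::real) a)"
  have cs: "coeff s j = (if j \<le> r then 1 else 0)" for j
    unfolding s_def by (simp add: coeff_sum coeff_monom)
  define j0 where "j0 = min i r"
  have "coeff (s ^ 2) i = (\<Sum>j\<le>i. coeff s j * coeff s (i - j))"
    by (simp add: power2_eq_square coeff_mult)
  also have "\<dots> \<ge> coeff s j0 * coeff s (i - j0)"
    by (rule member_le_sum) (auto simp: cs j0_def)
  also have "coeff s j0 * coeff s (i - j0) = 1"
    using assms by (auto simp: cs j0_def)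
  finally show ?thesis by (simp add: s_def)
qed

lemma square_weight_even:
  fixes x :: "nat \<Rightarrow> real"
  assumes "m = 2 * k" "k \<ge> 1" "i0 < n" "x i0 \<noteq> 0"
  shows "0 < (\<Sum>i<n. x i * x i ^ (m - 1))"
    and "degree (poly_of_vec n x ^ k) \<le> m * (n - 1) div 2"
    and "poly_of_vec n x * poly_of_vec n x ^ (m - 1) = poly_of_vec n x ^ k * poly_of_vec n x ^ k"
proof -
  have xm: "x i * x i ^ (m - 1) = (x i ^ 2) ^ k" for i
    using assms(1,2) by (simp flip: power_Suc add: power_mult)
  show "0 < (\<Sum>i<n. x i * x i ^ (m - 1))"
    unfolding xm using assms(3,4) by (intro sum_pos2[of _ i0]) auto
  have "degree (poly_of_vec n x ^ k) \<le> k * (n - 1)"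
    using degree_power_le[of "poly_of_vec n x" k] degree_poly_of_vec[of n x]
    by (metis mult.commute mult_le_mono2 order_trans)
  then show "degree (poly_of_vec n x ^ k) \<le> m * (n - 1) div 2"
    using assms(1) by simp
  show "poly_of_vec n x * poly_of_vec n x ^ (m - 1) = poly_of_vec n x ^ k * poly_of_vec n x ^ k"
    using assms(1,2) by (simp flip: power_Suc power_add add: mult_2)
qed

lemma square_weight_odd:
  fixes x :: "nat \<Rightarrow> real"
  assumes "m = 2 * k + 1" "n - 1 = 2 * r" "i0 < n" "x i0 \<noteq> 0"
  defines "s \<equiv> \<Sum>a\<le>r. monom (1::real) a"
  shows "0 < (\<Sum>i<n. coeff (s ^ 2) i * x i ^ (m - 1))"
    and "degree (s * poly_of_vec n x ^ k) \<le> m * (n - 1) div 2"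
    and "poly_of_vec n (coeff (s ^ 2)) * poly_of_vec n x ^ (m - 1) =
           (s * poly_of_vec n x ^ k) * (s * poly_of_vec n x ^ k)"
proof -
  have wpos: "0 < coeff (s ^ 2) i" if "i < n" for i
    unfolding s_def using assms(2,3) that by (intro coeff_square_ones_pos) linarith
  have even_pow: "x i ^ (m - 1) = (x i ^ 2) ^ k" for i
    using assms(1) by (simp add: power_mult)
  have "0 \<le> coeff (s ^ 2) i * x i ^ (m - 1)" if "i < n" for i
    using wpos[OF that] unfolding even_pow by simp
  moreover have "0 < coeff (s ^ 2) i0 * x i0 ^ (m - 1)"
    using wpos[OF assms(3)] assms(4) unfolding even_pow by simp
  ultimately show "0 < (\<Sum>i<n. coeff (s ^ 2) i * x i ^ (m - 1))"
    using assms(3) by (intro sum_pos2[of _ i0]) auto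
  have degs: "degree s \<le> r"
    unfolding s_def by (intro degree_sum_le) (auto intro: order_trans[OF degree_monom_le])
  have "degree (poly_of_vec n x ^ k) \<le> k * (n - 1)"
    using degree_power_le[of "poly_of_vec n x" k] degree_poly_of_vec[of n x]
    by (metis mult.commute mult_le_mono2 order_trans)
  then show "degree (s * poly_of_vec n x ^ k) \<le> m * (n - 1) div 2"
    using degree_mult_le[of s "poly_of_vec n x ^ k"] degs assms(1,2) by simp
  have "degree (s ^ 2) < n"
    using degree_power_le[of s 2] degs assms(2,3) by linarith
  then have weight: "poly_of_vec n (coeff (s ^ 2)) = s * s"
    by (simp add: poly_of_vec_coeff power2_eq_square)
  have "poly_of_vec n x ^ (m - 1) = poly_of_vec n x ^ k * poly_of_vec n x ^ k"
    using assms(1) by (simp flip: power_add add: mult_2)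
  then show "poly_of_vec n (coeff (s ^ 2)) * poly_of_vec n x ^ (m - 1) =
           (s * poly_of_vec n x ^ k) * (s * poly_of_vec n x ^ k)"
    by (simp add: weight mult_ac)
qed

lemma exists_square_weight:
  fixes x :: "nat \<Rightarrow> real"
  assumes "m \<ge> 2" "even (m * (n - 1))" "i0 < n" "x i0 \<noteq> 0"
  obtains w q where "0 < (\<Sum>i<n. w i * x i ^ (m - 1))"
    and "degree q \<le> m * (n - 1) div 2"
    and "poly_of_vec n w * poly_of_vec n x ^ (m - 1) = q * q"
proof (cases "even m")
  case True
  then obtain k where "m = 2 * k" by blast
  with assms square_weight_even[of m k i0 n x] that show ?thesis by auto
next
  case False
  then obtain k where k: "m = 2 * k + 1" using oddE by blast
  from False assms(2) have "even (n - 1)" by simp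
  then obtain r where "n - 1 = 2 * r" by blast
  with k assms square_weight_odd[of m k n r i0 x] that show ?thesis by blast
qed

theorem corollary1:
  fixes m n :: nat and h :: "nat \<Rightarrow> real"
  assumes "m \<ge> 2" and "even (m * (n - 1))"
    and "strong_hankel m n h"
  shows "\<not> (\<exists>lam. lam < 0 \<and> H_eigenvalue m n h lam)"
proof
  assume "\<exists>lam. lam < 0 \<and> H_eigenvalue m n h lam"
  then obtain lam x i0 where lam: "lam < 0" and i0: "i0 < n" "x i0 \<noteq> 0"
    and eig: "\<forall>i<n. hankel_apply m n h x i = lam * x i ^ (m - 1)"
    unfolding H_eigenvalue_def by blast
  obtain w q where pos: "0 < (\<Sum>i<n. w i * x i ^ (m - 1))"
    and deg: "degree q \<le> m * (n - 1) div 2"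
    and square: "poly_of_vec n w * poly_of_vec n x ^ (m - 1) = q * q"
    using exists_square_weight[of m n i0 x] assms(1,2) i0 by blast
  let ?L = "hankel_functional h (m * (n - 1) + 1)"
  have "?L (q * q) = (\<Sum>i<n. w i * ?L (monom 1 i * poly_of_vec n x ^ (m - 1)))"
    unfolding hankel_functional_weighted square ..
  also have "\<dots> = (\<Sum>i<n. w i * hankel_apply m n h x i)"
    using hankel_apply_eq_functional[of m _ n "m * (n - 1) + 1" h x] assms(1) by simp
  also have "\<dots> = lam * (\<Sum>i<n. w i * x i ^ (m - 1))"
    using eig by (simp add: sum_distrib_left algebra_simps)
  also have "\<dots> < 0"
    using lam pos by (rule mult_neg_pos)
  finally show False
    using strong_hankel_functional_square_nonneg[OF assms(3) deg] by simp
qed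

end
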